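(* Let $\Omega\subset\mathbb{R}^2$ be open, $\lambda>0$, and let $u\in L^2(\Omega)$ satisfy $-\Delta u=\lambda u$ in $\Omega$. Let $\mathbf{x}_0\in\Omega$, $h>0$, $\alpha\in(0,1)$, and let $\mathbf{e}^-,\mathbf{e}^+$ be unit vectors with angle $\alpha\pi$ from $\mathbf{e}^-$ to $\mathbf{e}^+$; put $\Gamma^\pm=\{\mathbf{x}_0+t\mathbf{e}^\pm:0\le t\le h\}\subset\Omega$. Suppose $\partial_\nu u=0$ on $\Gamma^+$ and on $\Gamma^-$ (both are singular lines; $\nu$ a unit normal to the respective segment). Let $n\in\mathbb{N}$, $n\ge3$. If $u(\mathbf{x}_0)=0$ and $\alpha\neq q/p$ for all integers $1\le q<p\le n-1$, then $u$ vanishes up to the order $n$ at $\mathbf{x}_0$, i.e. all partial derivatives of $u$ of order at most $n-1$ vanish at $\mathbf{x}_0$.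
   Context: No boundary condition is imposed on $\partial\Omega$; $u$ is real-analytic in $\Omega$. "Vanishes up to order $n$" means every homogeneous term of degree $<n$ in the Taylor expansion of $u$ at $\mathbf{x}_0$ vanishes. *)

theory Defs
  imports "HOL-Analysis.Analysis"
begin

text \<open>Points of the plane are pairs of reals (the product norm is Euclidean).\<close>

definition pdx :: "(real \<times> real \<Rightarrow> real) \<Rightarrow> real \<times> real \<Rightarrow> real" where
  "pdx f x = deriv (\<lambda>t. f (t, snd x)) (fst x)"

definition pdy :: "(real \<times> real \<Rightarrow> real) \<Rightarrow> real \<times> real \<Rightarrow> real" where
  "pdy f x = deriv (\<lambda>t. f (fst x, t)) (snd x)"

fun dpar :: "bool list \<Rightarrow> (real \<times> real \<Rightarrow> real) \<Rightarrow> real \<times> real \<Rightarrow> real" where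
  "dpar [] f = f"
| "dpar (b # bs) f = (if b then pdy else pdx) (dpar bs f)"

definition smooth_on :: "(real \<times> real) set \<Rightarrow> (real \<times> real \<Rightarrow> real) \<Rightarrow> bool" where
  "smooth_on S f \<longleftrightarrow> (\<forall>bs. dpar bs f differentiable_on S)"

definition laplacian :: "(real \<times> real \<Rightarrow> real) \<Rightarrow> real \<times> real \<Rightarrow> real" where
  "laplacian f x = pdx (pdx f) x + pdy (pdy f) x"

definition normal_deriv :: "(real \<times> real) \<Rightarrow> (real \<times> real \<Rightarrow> real) \<Rightarrow> real \<times> real \<Rightarrow> real" where
  "normal_deriv e f x = - snd e * pdx f x + fst e * pdy f x"

definition rot :: "real \<Rightarrow> real \<times> real \<Rightarrow> real \<times> real" where
  "rot \<theta> v = (cos \<theta> * fst v - sin \<theta> * snd v, sin \<theta> * fst v + cos \<theta> * snd v)"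

end

theory Submission
  imports Defs
begin

text \<open>Induction on the order \<open>m\<close>. Suppose all derivatives of order below \<open>m\<close> vanish at
  \<open>x0\<close>. Differentiating \<open>\<Delta>u = -\<lambda>u\<close> at \<open>x0\<close> then gives \<open>D (i+2) = - D i\<close> for
  \<open>D i = \<partial>x^i \<partial>y^(m-i) u (x0)\<close>, so the order-\<open>m\<close> derivatives are \<open>D i = Re (\<i>^i W)\<close> for a
  single complex number \<open>W\<close>. The normal derivative of \<open>u\<close> vanishes on a segment of direction
  \<open>(cos \<theta>, sin \<theta>)\<close>, hence so does its \<open>(m-1)\<close>-st derivative along the segment at \<open>x0\<close>,
  which reads \<open>Re (V e^(-\<i>m\<theta>)) = 0\<close> with \<open>V = \<i>^(m-1) W\<close>. The directions of the two
  segments differ by the angle \<open>\<alpha>\<pi>\<close> and \<open>sin (m\<alpha>\<pi>) \<noteq> 0\<close> for \<open>m < n\<close>, so the two equations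
  force \<open>V = 0\<close>.\<close>

section \<open>Partial derivatives of smooth functions\<close>

lemma has_derivative_imp_partials:
  fixes f :: "real \<times> real \<Rightarrow> real"
  assumes "(f has_derivative f') (at (x,y))"
  shows "((\<lambda>t. f (t, y)) has_real_derivative f' (1,0)) (at x)"
    and "((\<lambda>t. f (x, t)) has_real_derivative f' (0,1)) (at y)"
proof -
  have lin: "linear f'" using assms has_derivative_linear by blast
  have d1: "((\<lambda>t. (t, y)) has_derivative (\<lambda>t. (t, 0))) (at x)"
    by (auto intro!: derivative_eq_intros)
  have "((\<lambda>t. f (t, y)) has_derivative (\<lambda>t. f' (t,0))) (at x)"
    using has_derivative_compose[OF d1, of f f'] assms by (simp add: o_def)
  moreover have "(\<lambda>t. f' (t,0)) = (*) (f' (1,0))"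
  proof
    fix t :: real
    have "f' (t *\<^sub>R (1,0)) = t *\<^sub>R f' (1,0)" using lin linear_scale by blast
    then show "f' (t,0) = f' (1,0) * t" by simp
  qed
  ultimately show "((\<lambda>t. f (t, y)) has_real_derivative f' (1,0)) (at x)"
    by (simp add: has_field_derivative_def)
  have d2: "((\<lambda>t. (x, t)) has_derivative (\<lambda>t. (0, t))) (at y)"
    by (auto intro!: derivative_eq_intros)
  have "((\<lambda>t. f (x, t)) has_derivative (\<lambda>t. f' (0,t))) (at y)"
    using has_derivative_compose[OF d2, of f f'] assms by (simp add: o_def)
  moreover have "(\<lambda>t. f' (0,t)) = (*) (f' (0,1))"
  proof
    fix t :: real
    have "f' (t *\<^sub>R (0,1)) = t *\<^sub>R f' (0,1)" using lin linear_scale by blast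
    then show "f' (0,t) = f' (0,1) * t" by simp
  qed
  ultimately show "((\<lambda>t. f (x, t)) has_real_derivative f' (0,1)) (at y)"
    by (simp add: has_field_derivative_def)
qed

lemma partials_eq_frechet:
  fixes f :: "real \<times> real \<Rightarrow> real"
  assumes "(f has_derivative f') (at p)"
  shows "pdx f p = f' (1,0)" "pdy f p = f' (0,1)"
proof -
  obtain x y where p: "p = (x,y)" by fastforce
  show "pdx f p = f' (1,0)" using has_derivative_imp_partials(1)[of f f' x y] assms
    by (simp add: p pdx_def DERIV_imp_deriv)
  show "pdy f p = f' (0,1)" using has_derivative_imp_partials(2)[of f f' x y] assms
    by (simp add: p pdy_def DERIV_imp_deriv)
qed

lemma has_real_derivative_partials:
  fixes f :: "real \<times> real \<Rightarrow> real"
  assumes "f differentiable (at (x,y))"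
  shows "((\<lambda>t. f (t, y)) has_real_derivative pdx f (x,y)) (at x)"
    "((\<lambda>t. f (x, t)) has_real_derivative pdy f (x,y)) (at y)"
proof -
  obtain f' where d: "(f has_derivative f') (at (x,y))" using assms differentiable_def by blast
  show "((\<lambda>t. f (t, y)) has_real_derivative pdx f (x,y)) (at x)"
    using has_derivative_imp_partials(1)[OF d] partials_eq_frechet[OF d] by simp
  show "((\<lambda>t. f (x, t)) has_real_derivative pdy f (x,y)) (at y)"
    using has_derivative_imp_partials(2)[OF d] partials_eq_frechet[OF d] by simp
qed

lemma eventually_coordinate_lines_in_open:
  assumes "open S" "(x,y) \<in> S"
  shows "eventually (\<lambda>t. (t,y) \<in> S) (nhds x)" "eventually (\<lambda>t. (x,t) \<in> S) (nhds y)"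
proof -
  have "open ((\<lambda>t. (t,y)) -` S)" by (rule open_vimage[OF assms(1)]) (auto intro!: continuous_intros)
  then show "eventually (\<lambda>t. (t,y) \<in> S) (nhds x)"
    using eventually_nhds_in_open[of "(\<lambda>t. (t,y)) -` S" x] assms by simp
  have "open ((\<lambda>t. (x,t)) -` S)" by (rule open_vimage[OF assms(1)]) (auto intro!: continuous_intros)
  then show "eventually (\<lambda>t. (x,t) \<in> S) (nhds y)"
    using eventually_nhds_in_open[of "(\<lambda>t. (x,t)) -` S" y] assms by simp
qed

lemma partials_cong_open:
  assumes "open S" "\<forall>z\<in>S. f z = g z" "p \<in> S"
  shows "pdx f p = pdx g p" "pdy f p = pdy g p"
proof -
  obtain x y where p: "p = (x,y)" by fastforce
  have "eventually (\<lambda>t. f (t,y) = g (t,y)) (nhds x)"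
    using eventually_coordinate_lines_in_open(1)[of S x y] assms p by (auto elim: eventually_mono)
  then show "pdx f p = pdx g p" unfolding pdx_def p by (auto intro: deriv_cong_ev)
  have "eventually (\<lambda>t. f (x,t) = g (x,t)) (nhds y)"
    using eventually_coordinate_lines_in_open(2)[of S x y] assms p by (auto elim: eventually_mono)
  then show "pdy f p = pdy g p" unfolding pdy_def p by (auto intro: deriv_cong_ev)
qed

lemma dpar_cong_open:
  assumes "open S" "\<forall>z\<in>S. f z = g z"
  shows "\<forall>z\<in>S. dpar bs f z = dpar bs g z"
proof (induction bs)
  case Nil then show ?case using assms by simp
next
  case (Cons b bs) then show ?case using partials_cong_open[OF assms(1) Cons] by simp
qed

lemma differentiable_on_cong_open:
  assumes "open S" "\<forall>z\<in>S. f z = g z" "f differentiable_on S"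
  shows "g differentiable_on S"
  using assms unfolding differentiable_on_eq_differentiable_at[OF assms(1)] differentiable_def
  by (metis has_derivative_transform_within_open)

lemma dpar_append: "dpar (bs @ cs) f = dpar bs (dpar cs f)"
  by (induction bs) auto

lemma smooth_on_dpar: "smooth_on S f \<Longrightarrow> smooth_on S (dpar cs f)"
  unfolding smooth_on_def by (metis dpar_append)

lemma smooth_on_partials:
  "smooth_on S f \<Longrightarrow> smooth_on S (pdx f)" "smooth_on S f \<Longrightarrow> smooth_on S (pdy f)"
  using smooth_on_dpar[of S f "[False]"] smooth_on_dpar[of S f "[True]"] by auto

lemma smooth_on_imp_differentiable_at:
  "smooth_on S f \<Longrightarrow> open S \<Longrightarrow> p \<in> S \<Longrightarrow> f differentiable (at p)"
  unfolding smooth_on_def using differentiable_on_eq_differentiable_at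
  by (metis dpar.simps(1))

lemma partials_linear_comb:
  fixes f g :: "real \<times> real \<Rightarrow> real"
  assumes "f differentiable (at p)" "g differentiable (at p)"
  shows "pdx (\<lambda>x. a * f x + b * g x) p = a * pdx f p + b * pdx g p"
    "pdy (\<lambda>x. a * f x + b * g x) p = a * pdy f p + b * pdy g p"
proof -
  obtain f' g' where f: "(f has_derivative f') (at p)" and g: "(g has_derivative g') (at p)"
    using assms differentiable_def by blast
  have h: "((\<lambda>x. a * f x + b * g x) has_derivative (\<lambda>v. a * f' v + b * g' v)) (at p)"
    using f g by (auto intro!: derivative_eq_intros)
  show "pdx (\<lambda>x. a * f x + b * g x) p = a * pdx f p + b * pdx g p"
    using partials_eq_frechet[OF h] partials_eq_frechet[OF f] partials_eq_frechet[OF g] by simp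
  show "pdy (\<lambda>x. a * f x + b * g x) p = a * pdy f p + b * pdy g p"
    using partials_eq_frechet[OF h] partials_eq_frechet[OF f] partials_eq_frechet[OF g] by simp
qed

lemma dpar_linear_comb:
  assumes "open S" "smooth_on S f" "smooth_on S g"
  shows "\<forall>z\<in>S. dpar bs (\<lambda>x. a * f x + b * g x) z = a * dpar bs f z + b * dpar bs g z"
proof (induction bs)
  case Nil then show ?case by simp
next
  case (Cons c bs)
  show ?case
  proof
    fix z assume z: "z \<in> S"
    have "dpar bs f differentiable (at z)" "dpar bs g differentiable (at z)"
      using smooth_on_imp_differentiable_at[OF smooth_on_dpar[OF assms(2)] assms(1) z]
        smooth_on_imp_differentiable_at[OF smooth_on_dpar[OF assms(3)] assms(1) z] by auto
    then show "dpar (c # bs) (\<lambda>x. a * f x + b * g x) z = a * dpar (c # bs) f z + b * dpar (c # bs) g z"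
      using partials_cong_open[OF assms(1) Cons z] partials_linear_comb by simp
  qed
qed

lemma smooth_on_linear_comb:
  assumes "open S" "smooth_on S f" "smooth_on S g"
  shows "smooth_on S (\<lambda>x. a * f x + b * g x)"
  unfolding smooth_on_def
proof
  fix bs
  have "(\<lambda>z. a * dpar bs f z + b * dpar bs g z) differentiable_on S"
    using assms(2,3) unfolding smooth_on_def by (auto intro!: differentiable_on_add differentiable_on_mult)
  then show "dpar bs (\<lambda>x. a * f x + b * g x) differentiable_on S"
    using differentiable_on_cong_open[OF assms(1)] dpar_linear_comb[OF assms] by (metis (no_types, lifting))
qed

section \<open>Symmetry of mixed partial derivatives\<close>

lemma second_difference_eq_pdy_pdx:
  fixes g :: "real \<times> real \<Rightarrow> real"
  assumes s: "0 < s"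
    and D: "\<And>x y. a \<le> x \<Longrightarrow> x \<le> a+s \<Longrightarrow> b \<le> y \<Longrightarrow> y \<le> b+s \<Longrightarrow>
       g differentiable at (x,y) \<and> pdx g differentiable at (x,y)"
  shows "\<exists>\<xi> \<eta>. a \<le> \<xi> \<and> \<xi> \<le> a+s \<and> b \<le> \<eta> \<and> \<eta> \<le> b+s \<and>
     g (a+s,b+s) - g (a+s,b) - g (a,b+s) + g (a,b) = s^2 * pdy (pdx g) (\<xi>,\<eta>)"
proof -
  have "\<forall>x. a \<le> x \<and> x \<le> a+s \<longrightarrow>
      ((\<lambda>x. g (x,b+s) - g (x,b)) has_real_derivative (pdx g (x,b+s) - pdx g (x,b))) (at x)"
    using D s by (auto intro!: derivative_eq_intros has_real_derivative_partials)
  then obtain \<xi> where xi: "a < \<xi>" "\<xi> < a+s"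
    "(g (a+s,b+s) - g (a+s,b)) - (g (a,b+s) - g (a,b)) = (a+s-a) * (pdx g (\<xi>,b+s) - pdx g (\<xi>,b))"
    using MVT2[where a=a and b="a+s" and f="\<lambda>x. g (x,b+s) - g (x,b)"
        and f'="\<lambda>x. pdx g (x,b+s) - pdx g (x,b)"] s by auto
  have "\<forall>y. b \<le> y \<and> y \<le> b+s \<longrightarrow>
      ((\<lambda>y. pdx g (\<xi>,y)) has_real_derivative (pdy (pdx g) (\<xi>,y))) (at y)"
    using D xi by (auto intro!: has_real_derivative_partials)
  then obtain \<eta> where eta: "b < \<eta>" "\<eta> < b+s"
    "pdx g (\<xi>,b+s) - pdx g (\<xi>,b) = (b+s-b) * pdy (pdx g) (\<xi>,\<eta>)"
    using MVT2[where a=b and b="b+s" and f="\<lambda>y. pdx g (\<xi>,y)"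
        and f'="\<lambda>y. pdy (pdx g) (\<xi>,y)"] s by auto
  show ?thesis
    using xi eta by (intro exI[of _ \<xi>] exI[of _ \<eta>]) (auto simp: power2_eq_square algebra_simps)
qed

lemma second_difference_eq_pdx_pdy:
  fixes g :: "real \<times> real \<Rightarrow> real"
  assumes s: "0 < s"
    and D: "\<And>x y. a \<le> x \<Longrightarrow> x \<le> a+s \<Longrightarrow> b \<le> y \<Longrightarrow> y \<le> b+s \<Longrightarrow>
       g differentiable at (x,y) \<and> pdy g differentiable at (x,y)"
  shows "\<exists>\<xi> \<eta>. a \<le> \<xi> \<and> \<xi> \<le> a+s \<and> b \<le> \<eta> \<and> \<eta> \<le> b+s \<and>
     g (a+s,b+s) - g (a+s,b) - g (a,b+s) + g (a,b) = s^2 * pdx (pdy g) (\<xi>,\<eta>)"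
proof -
  have "\<forall>y. b \<le> y \<and> y \<le> b+s \<longrightarrow>
      ((\<lambda>y. g (a+s,y) - g (a,y)) has_real_derivative (pdy g (a+s,y) - pdy g (a,y))) (at y)"
    using D s by (auto intro!: derivative_eq_intros has_real_derivative_partials)
  then obtain \<eta> where eta: "b < \<eta>" "\<eta> < b+s"
    "(g (a+s,b+s) - g (a,b+s)) - (g (a+s,b) - g (a,b)) = (b+s-b) * (pdy g (a+s,\<eta>) - pdy g (a,\<eta>))"
    using MVT2[where a=b and b="b+s" and f="\<lambda>y. g (a+s,y) - g (a,y)"
        and f'="\<lambda>y. pdy g (a+s,y) - pdy g (a,y)"] s by auto
  have "\<forall>x. a \<le> x \<and> x \<le> a+s \<longrightarrow>
      ((\<lambda>x. pdy g (x,\<eta>)) has_real_derivative (pdx (pdy g) (x,\<eta>))) (at x)"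
    using D eta by (auto intro!: has_real_derivative_partials)
  then obtain \<xi> where xi: "a < \<xi>" "\<xi> < a+s"
    "pdy g (a+s,\<eta>) - pdy g (a,\<eta>) = (a+s-a) * pdx (pdy g) (\<xi>,\<eta>)"
    using MVT2[where a=a and b="a+s" and f="\<lambda>x. pdy g (x,\<eta>)"
        and f'="\<lambda>x. pdx (pdy g) (x,\<eta>)"] s by auto
  show ?thesis
    using xi eta by (intro exI[of _ \<xi>] exI[of _ \<eta>]) (auto simp: power2_eq_square algebra_simps)
qed

lemma dist_in_square_le:
  fixes a b x y s :: real
  assumes "a \<le> x" "x \<le> a+s" "b \<le> y" "y \<le> b+s"
  shows "dist (x,y) (a,b) \<le> 2 * s"
proof -
  have "dist (x,y) (a,b) = sqrt ((x-a)^2 + (y-b)^2)" by (simp add: dist_Pair_Pair dist_real_def)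
  also have "\<dots> \<le> \<bar>x-a\<bar> + \<bar>y-b\<bar>" by (rule sqrt_sum_squares_le_sum_abs)
  also have "\<dots> \<le> 2 * s" using assms by auto
  finally show ?thesis .
qed

lemma mixed_partials_meet_near:
  assumes S: "open S" and g: "smooth_on S g" and pS: "p \<in> S" and d: "d > 0"
  shows "\<exists>q q'. dist q p < d \<and> dist q' p < d \<and> pdy (pdx g) q = pdx (pdy g) q'"
proof -
  obtain a b where p: "p = (a,b)" by fastforce
  obtain r where r: "r > 0" "ball p r \<subseteq> S" using S pS open_contains_ball by blast
  define s where "s = min r d / 4"
  have s: "s > 0" using r d unfolding s_def by auto
  have near: "dist (x,y) p < min r d" if "a \<le> x" "x \<le> a+s" "b \<le> y" "y \<le> b+s" for x y
    using dist_in_square_le[OF that] s unfolding p s_def by linarith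
  have diff: "g differentiable at (x,y) \<and> pdx g differentiable at (x,y) \<and> pdy g differentiable at (x,y)"
    if "a \<le> x" "x \<le> a+s" "b \<le> y" "y \<le> b+s" for x y
  proof -
    have "(x,y) \<in> S" using near[OF that] r(2) by (auto simp: dist_commute)
    then show ?thesis using smooth_on_imp_differentiable_at[OF _ S] g smooth_on_partials by blast
  qed
  obtain \<xi> \<eta> where 1: "a \<le> \<xi>" "\<xi> \<le> a+s" "b \<le> \<eta>" "\<eta> \<le> b+s"
     "g (a+s,b+s) - g (a+s,b) - g (a,b+s) + g (a,b) = s^2 * pdy (pdx g) (\<xi>,\<eta>)"
    using second_difference_eq_pdy_pdx[OF s] diff by blast
  obtain \<xi>' \<eta>' where 2: "a \<le> \<xi>'" "\<xi>' \<le> a+s" "b \<le> \<eta>'" "\<eta>' \<le> b+s"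
     "g (a+s,b+s) - g (a+s,b) - g (a,b+s) + g (a,b) = s^2 * pdx (pdy g) (\<xi>',\<eta>')"
    using second_difference_eq_pdx_pdy[OF s] diff by blast
  have "pdy (pdx g) (\<xi>,\<eta>) = pdx (pdy g) (\<xi>',\<eta>')" using 1(5) 2(5) s by simp
  then show ?thesis using near[OF 1(1-4)] near[OF 2(1-4)] by fastforce
qed

lemma pdx_pdy_commute:
  assumes S: "open S" and g: "smooth_on S g" and pS: "p \<in> S"
  shows "pdx (pdy g) p = pdy (pdx g) p"
proof -
  have "continuous (at p) (dpar [True,False] g)" "continuous (at p) (dpar [False,True] g)"
    using smooth_on_imp_differentiable_at[OF smooth_on_dpar[OF g] S pS]
      differentiable_imp_continuous_within by blast+
  then have cont: "continuous (at p) (pdy (pdx g))" "continuous (at p) (pdx (pdy g))" by simp_all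
  have "dist (pdy (pdx g) p) (pdx (pdy g) p) < e" if e: "e > 0" for e
  proof -
    obtain d1 where d1: "d1 > 0" "\<forall>z. dist z p < d1 \<longrightarrow> dist (pdy (pdx g) z) (pdy (pdx g) p) < e/2"
      using cont(1) e unfolding continuous_at_eps_delta by (meson half_gt_zero)
    obtain d2 where d2: "d2 > 0" "\<forall>z. dist z p < d2 \<longrightarrow> dist (pdx (pdy g) z) (pdx (pdy g) p) < e/2"
      using cont(2) e unfolding continuous_at_eps_delta by (meson half_gt_zero)
    obtain q q' where "dist q p < min d1 d2" "dist q' p < min d1 d2" "pdy (pdx g) q = pdx (pdy g) q'"
      using mixed_partials_meet_near[OF S g pS, of "min d1 d2"] d1(1) d2(1) by auto
    then show ?thesis using d1(2) d2(2) by (metis dist_commute dist_triangle_half_l min_less_iff_conj)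
  qed
  then show ?thesis by (metis less_irrefl zero_less_dist_iff)
qed

lemma pdy_dpar_commute:
  assumes S: "open S" and g: "smooth_on S g"
  shows "\<forall>z\<in>S. pdy (dpar bs g) z = dpar bs (pdy g) z"
proof (induction bs)
  case Nil then show ?case by simp
next
  case (Cons c bs)
  show ?case
  proof
    fix z assume z: "z \<in> S"
    have "dpar (c # bs) (pdy g) z = (if c then pdy else pdx) (pdy (dpar bs g)) z"
      using partials_cong_open[OF S _ z, of "dpar bs (pdy g)" "pdy (dpar bs g)"] Cons by auto
    then show "pdy (dpar (c # bs) g) z = dpar (c # bs) (pdy g) z"
      using pdx_pdy_commute[OF S smooth_on_dpar[OF g] z, of bs] by (cases c) simp_all
  qed
qed

lemma dpar_sort:
  assumes S: "open S" and g: "smooth_on S g"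
  shows "\<forall>z\<in>S. dpar bs g z =
    dpar (replicate (count_list bs False) False @ replicate (count_list bs True) True) g z"
proof (induction bs)
  case Nil then show ?case by simp
next
  case (Cons c bs)
  show ?case
  proof
    fix z assume z: "z \<in> S"
    let ?s = "replicate (count_list bs False) False @ replicate (count_list bs True) True"
    show "dpar (c # bs) g z = dpar (replicate (count_list (c # bs) False) False @
        replicate (count_list (c # bs) True) True) g z"
    proof (cases c)
      case False
      then show ?thesis using partials_cong_open(1)[OF S Cons z] by simp
    next
      case True
      have "dpar (c # bs) g z = pdy (dpar ?s g) z" using partials_cong_open(2)[OF S Cons z] True by simp
      also have "\<dots> = dpar ?s (pdy g) z" using pdy_dpar_commute[OF S g] z by blast
      also have "\<dots> = dpar (?s @ [True]) g z" by (simp add: dpar_append)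
      also have "?s @ [True] = replicate (count_list (c # bs) False) False @
        replicate (count_list (c # bs) True) True" using True by (simp add: replicate_append_same)
      finally show ?thesis .
    qed
  qed
qed

lemma dpar_eq_sorted:
  assumes "open S" "smooth_on S g" "z \<in> S"
    and "count_list bs False = i" "count_list bs True = j"
  shows "dpar bs g z = dpar (replicate i False @ replicate j True) g z"
  using dpar_sort[OF assms(1,2)] assms(3-5) by blast

section \<open>Directional derivatives along a segment\<close>

definition dir_deriv :: "real \<times> real \<Rightarrow> (real \<times> real \<Rightarrow> real) \<Rightarrow> real \<times> real \<Rightarrow> real" where
  "dir_deriv e G x = fst e * pdx G x + snd e * pdy G x"

lemma smooth_on_dir_deriv: "open S \<Longrightarrow> smooth_on S G \<Longrightarrow> smooth_on S (dir_deriv e G)"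
  unfolding dir_deriv_def[abs_def] using smooth_on_linear_comb smooth_on_partials by blast

lemma smooth_on_dir_deriv_pow: "open S \<Longrightarrow> smooth_on S G \<Longrightarrow> smooth_on S ((dir_deriv e ^^ k) G)"
  by (induction k) (auto intro: smooth_on_dir_deriv)

lemma has_real_derivative_along_line:
  fixes G :: "real \<times> real \<Rightarrow> real"
  assumes "G differentiable at (x0 + t *\<^sub>R v)"
  shows "((\<lambda>t. G (x0 + t *\<^sub>R v)) has_real_derivative dir_deriv v G (x0 + t *\<^sub>R v)) (at t)"
proof -
  obtain G' where G: "(G has_derivative G') (at (x0 + t *\<^sub>R v))"
    using assms differentiable_def by blast
  have lin: "linear G'" using G has_derivative_linear by blast
  have "((\<lambda>t. x0 + t *\<^sub>R v) has_derivative (\<lambda>t. t *\<^sub>R v)) (at t)"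
    by (auto intro!: derivative_eq_intros)
  from has_derivative_compose[OF this G]
  have c: "((\<lambda>t. G (x0 + t *\<^sub>R v)) has_derivative (\<lambda>s. G' (s *\<^sub>R v))) (at t)"
    by (simp add: o_def)
  have "v = fst v *\<^sub>R (1,0) + snd v *\<^sub>R ((0::real),(1::real))" by simp
  then have "G' v = fst v * G' (1,0) + snd v * G' (0,1)"
    by (metis linear_add[OF lin] linear_scale[OF lin] real_scaleR_def)
  then have "G' v = dir_deriv v G (x0 + t *\<^sub>R v)" using partials_eq_frechet[OF G] by (simp add: dir_deriv_def)
  moreover have "(\<lambda>s. G' (s *\<^sub>R v)) = (*) (G' v)"
    by (rule ext) (simp add: linear_scale[OF lin])
  ultimately show ?thesis using c by (simp add: has_field_derivative_def)
qed

lemma dir_deriv_vanishes_on_segment: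
  assumes S: "open S" and G: "smooth_on S G" and h: "h > 0"
    and seg: "closed_segment x0 (x0 + h *\<^sub>R e) \<subseteq> S"
    and z: "\<forall>x\<in>closed_segment x0 (x0 + h *\<^sub>R e). G x = 0"
  shows "\<forall>x\<in>closed_segment x0 (x0 + h *\<^sub>R e). dir_deriv e G x = 0"
proof -
  define v where "v = h *\<^sub>R e"
  have seg_param: "closed_segment x0 (x0 + h *\<^sub>R e) = (\<lambda>t. x0 + t *\<^sub>R v) ` {0..1}"
    unfolding closed_segment_def v_def by (auto simp: algebra_simps)
  have inner: "dir_deriv v G (x0 + t *\<^sub>R v) = 0" if t: "0 < t" "t < 1" for t
  proof -
    have "x0 + t *\<^sub>R v \<in> S" using seg t unfolding seg_param by (auto simp: image_subset_iff)
    then have "((\<lambda>t. G (x0 + t *\<^sub>R v)) has_real_derivative dir_deriv v G (x0 + t *\<^sub>R v)) (at t)"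
      by (intro has_real_derivative_along_line smooth_on_imp_differentiable_at[OF G S])
    then have "((\<lambda>t. 0) has_real_derivative dir_deriv v G (x0 + t *\<^sub>R v)) (at t)"
      by (rule has_field_derivative_transform_within_open[of _ _ _ "{0<..<1}"])
        (use t z in \<open>auto simp: seg_param\<close>)
    then show ?thesis using DERIV_const DERIV_unique by blast
  qed
  have "continuous_on S (dir_deriv v G)"
    using smooth_on_dir_deriv[OF S G] unfolding smooth_on_def
    by (metis differentiable_imp_continuous_on dpar.simps(1))
  then have "continuous_on {0..1} (\<lambda>t. dir_deriv v G (x0 + t *\<^sub>R v))"
    by (rule continuous_on_compose2[of S]) (use seg seg_param in \<open>auto intro!: continuous_intros\<close>)
  then have "closed {t \<in> {0..1}. dir_deriv v G (x0 + t *\<^sub>R v) = 0}"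
    by (rule continuous_closed_preimage_constant) simp
  moreover have "{0<..<(1::real)} \<subseteq> {t \<in> {0..1}. dir_deriv v G (x0 + t *\<^sub>R v) = 0}"
    using inner by auto
  ultimately have "closure {0<..<(1::real)} \<subseteq> {t \<in> {0..1}. dir_deriv v G (x0 + t *\<^sub>R v) = 0}"
    using closure_minimal by blast
  then have "\<forall>x\<in>closed_segment x0 (x0 + h *\<^sub>R e). dir_deriv v G x = 0"
    unfolding seg_param by auto
  moreover have "dir_deriv v G x = h * dir_deriv e G x" for x
    by (simp add: v_def dir_deriv_def algebra_simps)
  ultimately show ?thesis using h by simp
qed

lemma dir_deriv_pow_vanishes_at_start:
  assumes S: "open S" and G: "smooth_on S G" and h: "h > 0"
    and seg: "closed_segment x0 (x0 + h *\<^sub>R e) \<subseteq> S"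
    and zero: "\<forall>x\<in>closed_segment x0 (x0 + h *\<^sub>R e). G x = 0"
  shows "(dir_deriv e ^^ k) G x0 = 0"
proof -
  have "\<forall>x\<in>closed_segment x0 (x0 + h *\<^sub>R e). (dir_deriv e ^^ k) G x = 0"
  proof (induction k)
    case 0 then show ?case using zero by simp
  next
    case (Suc k) then show ?case
      using dir_deriv_vanishes_on_segment[OF S smooth_on_dir_deriv_pow[OF S G] h seg] by simp
  qed
  then show ?thesis by auto
qed

lemma dir_deriv_pow_eq_Re:
  assumes S: "open S" and z: "z \<in> S" and G: "smooth_on S G"
    and derivs: "\<forall>bs. length bs = k \<longrightarrow> dpar bs G z = Re (\<i> ^ count_list bs False * W)"
  shows "(dir_deriv e ^^ k) G z = Re (W * (of_real (snd e) + \<i> * of_real (fst e)) ^ k)"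
  using G derivs
proof (induction k arbitrary: G W)
  case 0
  then show ?case using spec[OF "0.prems"(2), of "[]"] by simp
next
  case (Suc k)
  let ?\<zeta> = "of_real (snd e) + \<i> * of_real (fst e)"
  have "\<forall>bs. length bs = k \<longrightarrow> dpar bs (dir_deriv e G) z = Re (\<i> ^ count_list bs False * (W * ?\<zeta>))"
  proof (intro allI impI)
    fix bs :: "bool list" assume l: "length bs = k"
    note lin = dpar_linear_comb[OF S smooth_on_partials[OF Suc.prems(1)], of bs "fst e" "snd e"]
    have "dpar bs (dir_deriv e G) z = fst e * dpar bs (pdx G) z + snd e * dpar bs (pdy G) z"
      using lin z unfolding dir_deriv_def[abs_def] by blast
    also have "\<dots> = fst e * dpar (bs @ [False]) G z + snd e * dpar (bs @ [True]) G z"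
      by (simp add: dpar_append)
    also have "\<dots> = fst e * Re (\<i> ^ Suc (count_list bs False) * W) + snd e * Re (\<i> ^ count_list bs False * W)"
      using Suc.prems(2) l by simp
    also have "\<dots> = Re (\<i> ^ count_list bs False * (W * ?\<zeta>))"
      by (simp add: algebra_simps)
    finally show "dpar bs (dir_deriv e G) z = Re (\<i> ^ count_list bs False * (W * ?\<zeta>))" .
  qed
  from Suc.IH[OF smooth_on_dir_deriv[OF S Suc.prems(1)] this]
  show ?case by (simp only: funpow_Suc_right o_def) (simp add: mult.assoc)
qed

section \<open>Taylor terms of solutions of the Helmholtz equation\<close>

lemma count_list_replicate: "count_list (replicate n x) y = (if x = y then n else 0)"
  by (induction n) auto

lemma count_list_False_True: "count_list bs False + count_list bs True = length (bs :: bool list)"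
  by (induction bs) auto

lemma helmholtz_leading_derivs:
  assumes S: "open S" and u: "smooth_on S u" and x0: "x0 \<in> S"
    and helmholtz: "\<forall>x\<in>S. laplacian u x = c * u x"
    and lower: "\<forall>bs. length bs < m \<longrightarrow> dpar bs u x0 = 0"
  shows "\<exists>W. \<forall>bs. length bs = m \<longrightarrow> dpar bs u x0 = Re (\<i> ^ count_list bs False * W)"
proof -
  define D where "D i = dpar (replicate i False @ replicate (m-i) True) u x0" for i
  define W where "W = Complex (D 0) (- D 1)"
  have recurrence: "D (j+2) = - D j" if "j + 2 \<le> m" for j
  proof -
    define bs where "bs = replicate j False @ replicate (m-2-j) True"
    have "dpar bs (pdx (pdx u)) x0 = dpar (bs @ [False, False]) u x0" by (simp add: dpar_append)
    also have "\<dots> = D (j+2)" unfolding D_def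
      by (rule dpar_eq_sorted[OF S u x0]) (use that in \<open>simp_all add: bs_def count_list_replicate\<close>)
    finally have xx: "dpar bs (pdx (pdx u)) x0 = D (j+2)" .
    have "dpar bs (pdy (pdy u)) x0 = dpar (bs @ [True, True]) u x0" by (simp add: dpar_append)
    also have "\<dots> = D j" unfolding D_def
      by (rule dpar_eq_sorted[OF S u x0]) (use that in \<open>simp_all add: bs_def count_list_replicate\<close>)
    finally have yy: "dpar bs (pdy (pdy u)) x0 = D j" .
    have "\<forall>z\<in>S. dpar bs (\<lambda>x. 1 * pdx (pdx u) x + 1 * pdy (pdy u) x) z = dpar bs (\<lambda>x. c * u x + 0 * u x) z"
      by (rule dpar_cong_open[OF S]) (use helmholtz in \<open>simp add: laplacian_def\<close>)
    then have "dpar bs (\<lambda>x. 1 * pdx (pdx u) x + 1 * pdy (pdy u) x) x0 = dpar bs (\<lambda>x. c * u x + 0 * u x) x0"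
      using x0 by blast
    then have "1 * dpar bs (pdx (pdx u)) x0 + 1 * dpar bs (pdy (pdy u)) x0 = c * dpar bs u x0 + 0 * dpar bs u x0"
      by (simp only: dpar_linear_comb[OF S u u, rule_format, OF x0]
          dpar_linear_comb[OF S smooth_on_partials(1)[OF smooth_on_partials(1)[OF u]]
            smooth_on_partials(2)[OF smooth_on_partials(2)[OF u]], rule_format, OF x0])
    moreover have "dpar bs u x0 = 0" using lower that unfolding bs_def by simp
    ultimately show ?thesis using xx yy by simp
  qed
  have D_eq: "D i = Re (\<i> ^ i * W)" if "i \<le> m" for i
    using that
  proof (induction i rule: less_induct)
    case (less i)
    consider "i = 0" | "i = 1" | j where "i = j + 2"
      by (metis One_nat_def add_2_eq_Suc' not0_implies_Suc)
    then show ?case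
    proof cases
      case 3
      then have "D j = Re (\<i> ^ j * W)" using less by simp
      then show ?thesis using recurrence[of j] less.prems 3 by (simp add: power_add)
    qed (simp_all add: W_def)
  qed
  show ?thesis
  proof (intro exI allI impI)
    fix bs :: "bool list" assume l: "length bs = m"
    have "dpar bs u x0 = D (count_list bs False)"
      unfolding D_def by (rule dpar_eq_sorted[OF S u x0]) (use count_list_False_True[of bs] l in auto)
    also have "\<dots> = Re (\<i> ^ count_list bs False * W)"
      using D_eq count_list_False_True[of bs] l by simp
    finally show "dpar bs u x0 = Re (\<i> ^ count_list bs False * W)" .
  qed
qed

lemma neumann_segment_constraint:
  assumes S: "open S" and u: "smooth_on S u" and x0: "x0 \<in> S" and h: "h > 0"
    and seg: "closed_segment x0 (x0 + h *\<^sub>R e) \<subseteq> S"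
    and neumann: "\<forall>x\<in>closed_segment x0 (x0 + h *\<^sub>R e). normal_deriv e u x = 0"
    and m: "m \<ge> 1"
    and derivs: "\<forall>bs. length bs = m \<longrightarrow> dpar bs u x0 = Re (\<i> ^ count_list bs False * W)"
  shows "Re (W * (of_real (fst e) - \<i> * of_real (snd e)) *
    (of_real (snd e) + \<i> * of_real (fst e)) ^ (m-1)) = 0"
proof -
  define G where "G = (\<lambda>x. (- snd e) * pdx u x + fst e * pdy u x)"
  note u' = smooth_on_partials[OF u]
  have sG: "smooth_on S G" unfolding G_def by (rule smooth_on_linear_comb[OF S u'])
  let ?W = "W * (of_real (fst e) - \<i> * of_real (snd e))"
  have "\<forall>bs. length bs = m-1 \<longrightarrow> dpar bs G x0 = Re (\<i> ^ count_list bs False * ?W)"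
  proof (intro allI impI)
    fix bs :: "bool list" assume l: "length bs = m-1"
    have "dpar bs G x0 = (- snd e) * dpar bs (pdx u) x0 + fst e * dpar bs (pdy u) x0"
      using dpar_linear_comb[OF S u'] x0 unfolding G_def by blast
    also have "\<dots> = (- snd e) * dpar (bs @ [False]) u x0 + fst e * dpar (bs @ [True]) u x0"
      by (simp add: dpar_append)
    also have "\<dots> = (- snd e) * Re (\<i> ^ Suc (count_list bs False) * W) + fst e * Re (\<i> ^ count_list bs False * W)"
      using derivs l m by simp
    also have "\<dots> = Re (\<i> ^ count_list bs False * ?W)"
      by (simp add: algebra_simps)
    finally show "dpar bs G x0 = Re (\<i> ^ count_list bs False * ?W)" .
  qed
  moreover have "(dir_deriv e ^^ (m-1)) G x0 = 0"
    by (rule dir_deriv_pow_vanishes_at_start[OF S sG h seg])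
      (use neumann in \<open>simp add: G_def normal_deriv_def\<close>)
  ultimately show ?thesis using dir_deriv_pow_eq_Re[OF S x0 sG, of "m-1" ?W e] by simp
qed

lemma Re_polar_form:
  assumes "m \<ge> 1"
  shows "Re (W * (of_real (cos \<phi>) - \<i> * of_real (sin \<phi>)) * (of_real (sin \<phi>) + \<i> * of_real (cos \<phi>)) ^ (m-1))
       = Re ((W * \<i> ^ (m-1)) * cis (- (real m * \<phi>)))"
proof -
  have c1: "of_real (cos \<phi>) - \<i> * of_real (sin \<phi>) = cis (-\<phi>)" by (simp add: complex_eq_iff)
  have c2: "of_real (sin \<phi>) + \<i> * of_real (cos \<phi>) = \<i> * cis (-\<phi>)" by (simp add: complex_eq_iff)
  obtain k where k: "m = Suc k" using assms by (cases m) auto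
  have "cis (-\<phi>) * (\<i> * cis (-\<phi>)) ^ (m-1) = \<i> ^ (m-1) * cis (-\<phi>) ^ m"
    unfolding k by (simp add: power_mult_distrib)
  also have "cis (-\<phi>) ^ m = cis (- (real m * \<phi>))" by (simp add: Complex.DeMoivre)
  finally show ?thesis unfolding c1 c2 by (simp add: mult.assoc mult.left_commute)
qed

lemma eq_0_if_Re_mult_cis_eq_0:
  assumes "Re (V * cis (- (real m * \<theta>))) = 0" "Re (V * cis (- (real m * \<theta>'))) = 0"
    and "sin (real m * (\<theta>' - \<theta>)) \<noteq> 0"
  shows "V = 0"
proof -
  define Z where "Z = V * cis (- (real m * \<theta>))"
  have "cis (- (real m * \<theta>')) = cis (- (real m * \<theta>)) * cis (- (real m * (\<theta>' - \<theta>)))"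
    by (simp add: cis_mult algebra_simps)
  then have "Re (Z * cis (- (real m * (\<theta>' - \<theta>)))) = 0"
    using assms(2) unfolding Z_def by (simp add: mult.assoc)
  then have "Re Z * cos (real m * (\<theta>' - \<theta>)) + Im Z * sin (real m * (\<theta>' - \<theta>)) = 0"
    by simp
  moreover have "Re Z = 0" using assms(1) Z_def by simp
  ultimately have "Z = 0" using assms(3) by (simp add: complex_eq_iff)
  then show "V = 0" unfolding Z_def by simp
qed

lemma derivs_vanish_next_order:
  assumes S: "open S" and u: "smooth_on S u" and x0: "x0 \<in> S"
    and helmholtz: "\<forall>x\<in>S. laplacian u x = c * u x"
    and "h > 0" and "closed_segment x0 (x0 + h *\<^sub>R (cos \<theta>, sin \<theta>)) \<subseteq> S"
    and "\<forall>x\<in>closed_segment x0 (x0 + h *\<^sub>R (cos \<theta>, sin \<theta>)). normal_deriv (cos \<theta>, sin \<theta>) u x = 0"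
    and "h' > 0" and "closed_segment x0 (x0 + h' *\<^sub>R (cos \<theta>', sin \<theta>')) \<subseteq> S"
    and "\<forall>x\<in>closed_segment x0 (x0 + h' *\<^sub>R (cos \<theta>', sin \<theta>')). normal_deriv (cos \<theta>', sin \<theta>') u x = 0"
    and m: "m \<ge> 1" and "sin (real m * (\<theta>' - \<theta>)) \<noteq> 0"
    and lower: "\<forall>bs. length bs < m \<longrightarrow> dpar bs u x0 = 0"
  shows "\<forall>bs. length bs = m \<longrightarrow> dpar bs u x0 = 0"
proof -
  obtain W where derivs: "\<forall>bs. length bs = m \<longrightarrow> dpar bs u x0 = Re (\<i> ^ count_list bs False * W)"
    using helmholtz_leading_derivs[OF S u x0 helmholtz lower] by blast
  have "Re ((W * \<i> ^ (m-1)) * cis (- (real m * \<theta>))) = 0"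
    using neumann_segment_constraint[OF S u x0 assms(5-7) m derivs]
    unfolding fst_conv snd_conv Re_polar_form[OF m] .
  moreover have "Re ((W * \<i> ^ (m-1)) * cis (- (real m * \<theta>'))) = 0"
    using neumann_segment_constraint[OF S u x0 assms(8-10) m derivs]
    unfolding fst_conv snd_conv Re_polar_form[OF m] .
  ultimately have "W * \<i> ^ (m-1) = 0" using eq_0_if_Re_mult_cis_eq_0 assms(12) by blast
  then show ?thesis using derivs by simp
qed

lemma sin_mult_pi_ne_0:
  assumes "0 < \<alpha>" "\<alpha> < 1" "1 \<le> m" "int m \<le> N"
    and "\<forall>p q :: int. 1 \<le> q \<and> q < p \<and> p \<le> N \<longrightarrow> \<alpha> \<noteq> real_of_int q / real_of_int p"
  shows "sin (real m * (\<alpha> * pi)) \<noteq> 0"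
proof
  assume "sin (real m * (\<alpha> * pi)) = 0"
  then obtain q :: int where "real m * (\<alpha> * pi) = of_int q * pi" using sin_zero_iff_int2 by blast
  then have q: "real m * \<alpha> = of_int q" by simp
  have "0 < real m * \<alpha>" "real m * \<alpha> < real m" using assms by simp_all
  then have "1 \<le> q" "q < int m" using q by linarith+
  moreover have "\<alpha> = real_of_int q / real_of_int (int m)" using q assms by (simp add: field_simps)
  ultimately show False using assms(4,5) by blast
qed

lemma unit_pair_eq_cos_sin:
  fixes v :: "real \<times> real"
  assumes "norm v = 1"
  shows "\<exists>\<theta>. v = (cos \<theta>, sin \<theta>)"
proof -
  have "(fst v)\<^sup>2 + (snd v)\<^sup>2 = 1"
    using assms by (metis norm_Pair prod.collapse real_norm_def power2_abs real_sqrt_eq_1_iff)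
  then show ?thesis using sincos_total_2pi by (metis prod.collapse)
qed

lemma rot_cos_sin: "rot \<beta> (cos \<theta>, sin \<theta>) = (cos (\<theta> + \<beta>), sin (\<theta> + \<beta>))"
  by (simp add: rot_def cos_add sin_add algebra_simps)

theorem theorem3p3:
  fixes \<Omega> :: "(real \<times> real) set" and u :: "real \<times> real \<Rightarrow> real"
    and lam h \<alpha> :: real and x0 em ep :: "real \<times> real" and n :: nat
  assumes "open \<Omega>" and "lam > 0"
    and "smooth_on \<Omega> u"
    and "(\<lambda>x. (u x)\<^sup>2) integrable_on \<Omega>"
    and "\<forall>x\<in>\<Omega>. - laplacian u x = lam * u x"
    and "x0 \<in> \<Omega>" and "h > 0" and "0 < \<alpha>" and "\<alpha> < 1"
    and "norm em = 1" and "ep = rot (\<alpha> * pi) em"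
    and "closed_segment x0 (x0 + h *\<^sub>R ep) \<subseteq> \<Omega>"
    and "closed_segment x0 (x0 + h *\<^sub>R em) \<subseteq> \<Omega>"
    and "\<forall>x\<in>closed_segment x0 (x0 + h *\<^sub>R ep). normal_deriv ep u x = 0"
    and "\<forall>x\<in>closed_segment x0 (x0 + h *\<^sub>R em). normal_deriv em u x = 0"
    and "n \<ge> 3"
    and "u x0 = 0"
    and "\<forall>p q :: int. 1 \<le> q \<and> q < p \<and> p \<le> int n - 1 \<longrightarrow> \<alpha> \<noteq> real_of_int q / real_of_int p"
  shows "\<forall>bs. length bs \<le> n - 1 \<longrightarrow> dpar bs u x0 = 0"
proof -
  obtain \<theta> where em: "em = (cos \<theta>, sin \<theta>)" using unit_pair_eq_cos_sin[OF assms(10)] by blast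
  have ep: "ep = (cos (\<theta> + \<alpha> * pi), sin (\<theta> + \<alpha> * pi))" by (simp add: assms(11) em rot_cos_sin)
  have helmholtz: "\<forall>x\<in>\<Omega>. laplacian u x = (- lam) * u x" using assms(5) by auto
  note seg_m = assms(13)[unfolded em] and neumann_m = assms(15)[unfolded em]
  note seg_p = assms(12)[unfolded ep] and neumann_p = assms(14)[unfolded ep]
  have "\<forall>bs. length bs = m \<longrightarrow> dpar bs u x0 = 0" if "m \<le> n - 1" for m
    using that
  proof (induction m rule: less_induct)
    case (less m)
    show ?case
    proof (cases "m = 0")
      case True then show ?thesis using assms(17) by simp
    next
      case False
      then have m: "m \<ge> 1" by simp
      have "int m \<le> int n - 1" using less.prems assms(16) by linarith
      then have "sin (real m * (\<alpha> * pi)) \<noteq> 0" by (rule sin_mult_pi_ne_0[OF assms(8,9) m _ assms(18)])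
      then have "sin (real m * (\<theta> + \<alpha> * pi - \<theta>)) \<noteq> 0" by simp
      moreover have "\<forall>bs. length bs < m \<longrightarrow> dpar bs u x0 = 0" using less by auto
      ultimately show ?thesis
        by (rule derivs_vanish_next_order[OF assms(1,3,6) helmholtz
              assms(7) seg_m neumann_m assms(7) seg_p neumann_p m])
    qed
  qed
  then show ?thesis by blast
qed

end
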